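(* For every binary matrix $P$ such that $Q_1\preccurlyeq P$, where $Q_1\in\{0,1\}^{3\times 3}$ has $\mathrm{supp}(Q_1)=\{(1,2),(2,1),(3,3)\}$, the class $\mathrm{Av}(P)$ is row-unbounded.
   Context: All matrices are binary; rows are numbered top to bottom, columns left to right; $(i,j)$ is the entry in row $i$, column $j$, a 1-entry if it equals 1; $\mathrm{supp}$ is the set of 1-entries. For integers, $(a,b]=\{a+1,\dots,b\}$. A pattern $P\in\{0,1\}^{k\times\ell}$ is an interval minor of $M\in\{0,1\}^{m\times n}$, written $P\preccurlyeq M$, if there are integers $0=r_0<\dots<r_k=m$ and $0=c_0<\dots<c_\ell=n$ such that for each 1-entry $(i,j)$ of $P$ the submatrix of $M$ on rows $(r_{i-1},r_i]$ and columns $(c_{j-1},c_j]$ contains a 1-entry; otherwise $M$ avoids $P$. $\mathrm{Av}(P)$ is the set of binary matrices avoiding $P$. A matrix $M\in\mathcal C$ is critical for $\mathcal C$ if changing any single 0-entry of $M$ into a 1-entry gives a matrix outside $\mathcal C$. A horizontal 0-run is a maximal set of consecutive 0-entries within a single row; the complexity of a row is the number of horizontal 0-runs in it. The row-complexity of $\mathcal C$ is the supremum over matrices critical for $\mathcal C$ of the maximum complexity of a row; $\mathcal C$ is row-unbounded if this supremum is infinite. *)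

theory Defs
  imports Main
begin

text \<open>A binary matrix is a triple (m, n, f): m rows, n columns, entry (i,j) (1-based,
  1 \<le> i \<le> m, 1 \<le> j \<le> n) equals 1 iff f i j. Values of f outside the range are ignored
  by all definitions below.\<close>
type_synonym bmat = "nat \<times> nat \<times> (nat \<Rightarrow> nat \<Rightarrow> bool)"

definition nrows :: "bmat \<Rightarrow> nat" where "nrows M = fst M"
definition ncols :: "bmat \<Rightarrow> nat" where "ncols M = fst (snd M)"
definition entry :: "bmat \<Rightarrow> nat \<Rightarrow> nat \<Rightarrow> bool" where "entry M = snd (snd M)"

definition interval_minor :: "bmat \<Rightarrow> bmat \<Rightarrow> bool" where
  "interval_minor P M \<longleftrightarrow>
     (\<exists>r c :: nat \<Rightarrow> nat.
        r 0 = 0 \<and> r (nrows P) = nrows M \<and> (\<forall>i < nrows P. r i < r (Suc i)) \<and>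
        c 0 = 0 \<and> c (ncols P) = ncols M \<and> (\<forall>j < ncols P. c j < c (Suc j)) \<and>
        (\<forall>i \<in> {1..nrows P}. \<forall>j \<in> {1..ncols P}. entry P i j \<longrightarrow>
           (\<exists>a \<in> {r (i - 1)<..r i}. \<exists>b \<in> {c (j - 1)<..c j}. entry M a b)))"

definition Av :: "bmat \<Rightarrow> bmat set" where
  "Av P = {M. \<not> interval_minor P M}"

definition set_one :: "bmat \<Rightarrow> nat \<Rightarrow> nat \<Rightarrow> bmat" where
  "set_one M i j = (nrows M, ncols M, (\<lambda>a b. if a = i \<and> b = j then True else entry M a b))"

definition critical :: "bmat set \<Rightarrow> bmat \<Rightarrow> bool" where
  "critical C M \<longleftrightarrow> M \<in> C \<and>
     (\<forall>i \<in> {1..nrows M}. \<forall>j \<in> {1..ncols M}. \<not> entry M i j \<longrightarrow> set_one M i j \<notin> C)"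

definition zero_runs :: "bmat \<Rightarrow> nat \<Rightarrow> nat set set" where
  "zero_runs M i = {J. \<exists>a b. 1 \<le> a \<and> a \<le> b \<and> b \<le> ncols M \<and> J = {a..b} \<and>
       (\<forall>j \<in> J. \<not> entry M i j) \<and>
       (a = 1 \<or> entry M i (a - 1)) \<and> (b = ncols M \<or> entry M i (b + 1))}"

definition row_complexity :: "bmat \<Rightarrow> nat \<Rightarrow> nat" where
  "row_complexity M i = card (zero_runs M i)"

definition row_unbounded :: "bmat set \<Rightarrow> bool" where
  "row_unbounded C \<longleftrightarrow>
     (\<forall>N :: nat. \<exists>M. critical C M \<and> (\<exists>i \<in> {1..nrows M}. row_complexity M i \<ge> N))"

definition Q1 :: bmat where
  "Q1 = (3, 3, (\<lambda>i j. (i, j) \<in> {(1,2), (2,1), (3,3)}))"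

end

theory Submission
  imports Defs
begin

text \<open>Among the copies of \<open>Q1\<close> in \<open>P\<close>, take one whose entry in the role of \<open>(1, 2)\<close>,
  say \<open>(\<rho>, \<kappa>)\<close>, lies as low as possible. The matrix \<open>MN\<close> below consists of \<open>N\<close> copies of
  the rows above \<open>\<rho>\<close> side by side, a row \<open>\<rho>\<close> whose only 1-entries are in \<open>N\<close> separating
  columns, and \<open>N\<close> copies of the remaining rows of \<open>P\<close> with \<open>(\<rho>, \<kappa>)\<close> deleted, placed
  along the antidiagonal. In an embedding of \<open>P\<close> into \<open>MN\<close>, the two entries below a top entry
  of row \<open>\<rho>\<close> must land in one lower copy, which, since \<open>\<rho>\<close> is as low as possible, pulls the top
  entry onto the row of that copy coming from row \<open>\<rho>\<close>; this gives an injection from the top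
  entries of row \<open>\<rho>\<close> of \<open>P\<close> into those other than \<open>(\<rho>, \<kappa>)\<close>, which is absurd. So \<open>MN\<close>
  avoids \<open>P\<close>, while filling any of the \<open>N\<close> gaps left for \<open>\<kappa>\<close> in row \<open>\<rho>\<close> creates \<open>P\<close>.
  A critical matrix above \<open>MN\<close> therefore has at least \<open>N\<close> 0-runs in row \<open>\<rho>\<close>.\<close>

locale interval_embedding =
  fixes P M :: bmat and r c :: "nat \<Rightarrow> nat"
  assumes row_cut_0: "r 0 = 0" and row_cut_last: "r (nrows P) = nrows M"
    and row_cut_step: "\<And>i. i < nrows P \<Longrightarrow> r i < r (Suc i)"
    and col_cut_0: "c 0 = 0" and col_cut_last: "c (ncols P) = ncols M"
    and col_cut_step: "\<And>j. j < ncols P \<Longrightarrow> c j < c (Suc j)"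
    and image_exists: "\<And>i j. i \<in> {1..nrows P} \<Longrightarrow> j \<in> {1..ncols P} \<Longrightarrow> entry P i j \<Longrightarrow>
      \<exists>a \<in> {r (i - 1)<..r i}. \<exists>b \<in> {c (j - 1)<..c j}. entry M a b"

lemma interval_minor_iff_embedding:
  "interval_minor P M \<longleftrightarrow> (\<exists>r c. interval_embedding P M r c)"
  unfolding interval_minor_def interval_embedding_def by blast

context interval_embedding
begin

lemma row_cut_mono: "i \<le> i' \<Longrightarrow> i' \<le> nrows P \<Longrightarrow> r i \<le> r i'"
  by (rule lift_Suc_mono_le_ivl[of "{..<nrows P}"]) (auto intro: less_imp_le row_cut_step)

lemma col_cut_mono: "j \<le> j' \<Longrightarrow> j' \<le> ncols P \<Longrightarrow> c j \<le> c j'"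
  by (rule lift_Suc_mono_le_ivl[of "{..<ncols P}"]) (auto intro: less_imp_le col_cut_step)

lemma row_cut_ge: "i \<le> nrows P \<Longrightarrow> i \<le> r i"
proof (induction i)
  case (Suc i)
  then show ?case using row_cut_step[of i] by simp
qed simp

lemma row_band_less:
  "a \<in> {r (i - 1)<..r i} \<Longrightarrow> a' \<in> {r (i' - 1)<..r i'} \<Longrightarrow> i < i' \<Longrightarrow> i' \<le> nrows P \<Longrightarrow> a < a'"
  using row_cut_mono[of i "i' - 1"] by fastforce

lemma col_band_less:
  "b \<in> {c (j - 1)<..c j} \<Longrightarrow> b' \<in> {c (j' - 1)<..c j'} \<Longrightarrow> j < j' \<Longrightarrow> j' \<le> ncols P \<Longrightarrow> b < b'"
  using col_cut_mono[of j "j' - 1"] by fastforce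

lemma image_in_range:
  assumes "i \<in> {1..nrows P}" "j \<in> {1..ncols P}" "a \<in> {r (i - 1)<..r i}" "b \<in> {c (j - 1)<..c j}"
  shows "a \<in> {1..nrows M}" "b \<in> {1..ncols M}"
  using assms row_cut_mono[of i "nrows P"] col_cut_mono[of j "ncols P"] row_cut_last col_cut_last
  by auto

end

lemma interval_minor_mono:
  assumes "interval_minor P M" "nrows M' = nrows M" "ncols M' = ncols M"
    and "\<And>a b. a \<in> {1..nrows M} \<Longrightarrow> b \<in> {1..ncols M} \<Longrightarrow> entry M a b \<Longrightarrow> entry M' a b"
  shows "interval_minor P M'"
proof -
  obtain r c where "interval_embedding P M r c"
    using assms(1) interval_minor_iff_embedding by blast
  then interpret interval_embedding P M r c .
  have "interval_embedding P M' r c"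
  proof
    fix i j assume ij: "i \<in> {1..nrows P}" "j \<in> {1..ncols P}" "entry P i j"
    then obtain a b where ab: "a \<in> {r (i - 1)<..r i}" "b \<in> {c (j - 1)<..c j}" "entry M a b"
      using image_exists by blast
    then have "entry M' a b" using assms(4) image_in_range[OF ij(1,2) ab(1,2)] by blast
    with ab show "\<exists>a \<in> {r (i - 1)<..r i}. \<exists>b \<in> {c (j - 1)<..c j}. entry M' a b" by blast
  qed (use row_cut_0 row_cut_last row_cut_step col_cut_0 col_cut_last col_cut_step assms(2,3) in auto)
  then show ?thesis using interval_minor_iff_embedding by blast
qed

definition bmat_of_set :: "nat \<Rightarrow> nat \<Rightarrow> (nat \<times> nat) set \<Rightarrow> bmat" where
  "bmat_of_set m n E = (m, n, \<lambda>a b. (a, b) \<in> E)"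

lemma bmat_of_set_simps [simp]:
  "nrows (bmat_of_set m n E) = m" "ncols (bmat_of_set m n E) = n"
  "entry (bmat_of_set m n E) a b \<longleftrightarrow> (a, b) \<in> E"
  by (simp_all add: bmat_of_set_def nrows_def ncols_def entry_def)

lemma set_one_simps [simp]:
  "nrows (set_one M i j) = nrows M" "ncols (set_one M i j) = ncols M"
  "entry (set_one M i j) a b \<longleftrightarrow> (a = i \<and> b = j) \<or> entry M a b"
  by (auto simp: set_one_def nrows_def ncols_def entry_def)

lemma Av_critical_extension:
  assumes "M \<in> Av P"
  obtains M' where "critical (Av P) M'" "nrows M' = nrows M" "ncols M' = ncols M"
    "\<And>a b. a \<in> {1..nrows M} \<Longrightarrow> b \<in> {1..ncols M} \<Longrightarrow> entry M a b \<Longrightarrow> entry M' a b"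
proof -
  define m n where "m = nrows M" and "n = ncols M"
  define U where "U = {1..m} \<times> {1..n}"
  define S where "S = {E. E \<subseteq> U \<and> bmat_of_set m n E \<in> Av P}"
  define E\<^sub>0 where "E\<^sub>0 = {(a, b) \<in> U. entry M a b}"
  have "\<not> interval_minor P (bmat_of_set m n E\<^sub>0)"
  proof
    assume "interval_minor P (bmat_of_set m n E\<^sub>0)"
    then have "interval_minor P M"
      by (rule interval_minor_mono) (auto simp: m_def n_def E\<^sub>0_def U_def)
    with assms show False by (simp add: Av_def)
  qed
  then have "E\<^sub>0 \<in> S" by (auto simp: S_def E\<^sub>0_def Av_def)
  moreover have "finite S"
    by (rule finite_subset[of _ "Pow U"]) (auto simp: S_def U_def)
  ultimately obtain E where E: "E \<in> S" "E\<^sub>0 \<subseteq> E"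
    and E_max: "\<And>E'. E' \<in> S \<Longrightarrow> E \<subseteq> E' \<Longrightarrow> E' = E"
    using finite_has_maximal2[of S E\<^sub>0] by metis
  have "critical (Av P) (bmat_of_set m n E)"
    unfolding critical_def
  proof (intro conjI ballI impI)
    show "bmat_of_set m n E \<in> Av P" using E(1) by (simp add: S_def)
  next
    fix i j
    assume ij: "i \<in> {1..nrows (bmat_of_set m n E)}" "j \<in> {1..ncols (bmat_of_set m n E)}"
      and zero: "\<not> entry (bmat_of_set m n E) i j"
    have "set_one (bmat_of_set m n E) i j = bmat_of_set m n (insert (i, j) E)"
      by (auto simp: set_one_def bmat_of_set_def nrows_def ncols_def entry_def)
    moreover have "bmat_of_set m n (insert (i, j) E) \<notin> Av P"
    proof
      assume "bmat_of_set m n (insert (i, j) E) \<in> Av P"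
      with ij E(1) have "insert (i, j) E \<in> S" by (simp add: S_def U_def)
      then have "insert (i, j) E = E" using E_max by blast
      with zero show False by (metis bmat_of_set_simps(3) insertI1)
    qed
    ultimately show "set_one (bmat_of_set m n E) i j \<notin> Av P" by simp
  qed
  moreover have "entry (bmat_of_set m n E) a b"
    if "a \<in> {1..nrows M}" "b \<in> {1..ncols M}" "entry M a b" for a b
    using that E(2) by (auto simp: E\<^sub>0_def U_def m_def n_def)
  ultimately show ?thesis by (intro that[of "bmat_of_set m n E"]) (simp_all add: m_def n_def)
qed

lemma zero_run_exists:
  assumes "1 \<le> g" "g \<le> ncols M" "\<not> entry M i g"
  shows "\<exists>R \<in> zero_runs M i. g \<in> R"
proof -
  define n where "n = ncols M"
  define L where "L = {j. 1 \<le> j \<and> j < g \<and> entry M i j}"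
  define U where "U = {j. g < j \<and> j \<le> n \<and> entry M i j}"
  define a where "a = (if L = {} then 1 else Suc (Max L))"
  define b where "b = (if U = {} then n else Min U - 1)"
  have fin: "finite L" "finite U" by (auto simp: L_def U_def)
  have "a \<le> g"
  proof (cases "L = {}")
    case False
    then have "Max L \<in> L" using fin by simp
    then have "Max L < g" unfolding L_def by blast
    with False show ?thesis by (simp add: a_def)
  qed (use assms(1) in \<open>simp add: a_def\<close>)
  have "g \<le> b"
    using fin assms(2) Min_in[of U] by (fastforce simp: b_def U_def n_def)
  have "b \<le> n"
  proof (cases "U = {}")
    case False
    then have "Min U \<in> U" using fin by simp
    then have "Min U \<le> n" unfolding U_def by blast
    with False show ?thesis by (simp add: b_def)
  qed (simp add: b_def)
  have zero: "\<not> entry M i j" if "j \<in> {a..b}" for j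
  proof
    assume one: "entry M i j"
    show False
    proof (cases "j < g")
      case True
      then have "j \<in> L" using that one \<open>1 \<le> g\<close> by (auto simp: L_def a_def split: if_splits)
      then have "j \<le> Max L" "L \<noteq> {}" using fin by auto
      with that show False by (simp add: a_def)
    next
      case False
      with assms(3) one have "g < j" by (cases "j = g") auto
      then have "j \<in> U" using that one \<open>b \<le> n\<close> by (auto simp: U_def b_def split: if_splits)
      then have U: "U \<noteq> {}" "Min U \<le> j" "Min U \<in> U"
        using fin(2) by (blast, metis Min_le, metis Min_in empty_iff)
      then have "g < Min U" by (simp add: U_def)
      moreover have "j \<le> Min U - 1" using U(1) that by (simp add: b_def)
      ultimately show False using U(2) by linarith
    qed
  qed
  have "a = 1 \<or> entry M i (a - 1)"
    using fin Max_in[of L] by (auto simp: a_def L_def)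
  moreover have "b = n \<or> entry M i (b + 1)"
    using fin Min_in[of U] by (auto simp: b_def U_def)
  moreover have "1 \<le> a" by (simp add: a_def)
  ultimately have "{a..b} \<in> zero_runs M i"
    using \<open>a \<le> g\<close> \<open>g \<le> b\<close> \<open>b \<le> n\<close> zero unfolding zero_runs_def n_def
    by (intro CollectI exI[of _ a] exI[of _ b]) auto
  with \<open>a \<le> g\<close> \<open>g \<le> b\<close> show ?thesis by (meson atLeastAtMost_iff)
qed

lemma finite_zero_runs: "finite (zero_runs M i)"
proof (rule finite_subset)
  show "zero_runs M i \<subseteq> (\<lambda>(a, b). {a..b}) ` ({0..ncols M} \<times> {0..ncols M})"
    unfolding zero_runs_def by force
qed simp

lemma row_complexity_ge:
  assumes zero: "\<And>t. t < n \<Longrightarrow> 1 \<le> z t \<and> z t \<le> ncols M \<and> \<not> entry M i (z t)"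
    and separated: "\<And>t. Suc t < n \<Longrightarrow> \<exists>s. z t < s \<and> s < z (Suc t) \<and> entry M i s"
  shows "n \<le> row_complexity M i"
proof -
  have "\<forall>t\<in>{..<n}. \<exists>Z. Z \<in> zero_runs M i \<and> z t \<in> Z"
    using zero zero_run_exists by blast
  then obtain R where R: "\<And>t. t < n \<Longrightarrow> R t \<in> zero_runs M i \<and> z t \<in> R t"
    using bchoice[of "{..<n}"] by (metis lessThan_iff)
  have z_step: "z t < z (Suc t)" if "Suc t < n" for t
    using separated[OF that] by auto
  have z_mono: "z t \<le> z t'" if "t \<le> t'" "t' < n" for t t'
    by (rule lift_Suc_mono_le_ivl[of "{..<n - 1}"]) (use that z_step in \<open>auto intro: less_imp_le\<close>)
  have "R t \<noteq> R t'" if tt': "t < t'" "t' < n" for t t'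
  proof
    assume same: "R t = R t'"
    have "R t \<in> zero_runs M i" using R tt' by simp
    then obtain a b where ab: "R t = {a..b}" "\<And>j. j \<in> {a..b} \<Longrightarrow> \<not> entry M i j"
      unfolding zero_runs_def by blast
    obtain s where s: "z t < s" "s < z (Suc t)" "entry M i s"
      using separated[of t] tt' by auto
    have "z t \<in> {a..b}" "z t' \<in> {a..b}"
      using R[of t] R[of t'] tt' same ab(1) by auto
    moreover have "z (Suc t) \<le> z t'" using z_mono tt' by simp
    ultimately have "s \<in> {a..b}" using s by auto
    with ab(2) s(3) show False by blast
  qed
  then have "inj_on R {..<n}"
    by (intro linorder_inj_onI) auto
  then have "card {..<n} \<le> card (zero_runs M i)"
    using R finite_zero_runs by (intro card_inj_on_le) auto
  then show ?thesis by (simp add: row_complexity_def)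
qed

definition Q1_top :: "bmat \<Rightarrow> nat \<Rightarrow> nat \<Rightarrow> bool" where
  "Q1_top P i j \<longleftrightarrow> 1 \<le> i \<and> 1 \<le> j \<and> entry P i j \<and>
     (\<exists>i1 j1 i2 j2. i < i1 \<and> i1 < i2 \<and> i2 \<le> nrows P \<and> 1 \<le> j1 \<and> j1 < j \<and> j < j2 \<and>
        j2 \<le> ncols P \<and> entry P i1 j1 \<and> entry P i2 j2)"

lemma Q1_top_bounds: "Q1_top P i j \<Longrightarrow> 1 \<le> i \<and> i < nrows P \<and> 1 \<le> j \<and> j < ncols P"
  unfolding Q1_top_def by auto

lemma Q1_top_exists:
  assumes "interval_minor Q1 P"
  shows "\<exists>i j. Q1_top P i j"
proof -
  obtain r c where "interval_embedding Q1 P r c"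
    using assms interval_minor_iff_embedding by blast
  then interpret interval_embedding Q1 P r c .
  have Q1: "nrows Q1 = 3" "ncols Q1 = 3" "entry Q1 1 2" "entry Q1 2 1" "entry Q1 3 3"
    by (simp_all add: Q1_def nrows_def ncols_def entry_def)
  obtain a b where ab: "a \<in> {r 0<..r 1}" "b \<in> {c 1<..c 2}" "entry P a b"
    using image_exists[of 1 2] Q1 by auto
  obtain a1 b1 where ab1: "a1 \<in> {r 1<..r 2}" "b1 \<in> {c 0<..c 1}" "entry P a1 b1"
    using image_exists[of 2 1] Q1 by auto
  obtain a2 b2 where ab2: "a2 \<in> {r 2<..r 3}" "b2 \<in> {c 2<..c 3}" "entry P a2 b2"
    using image_exists[of 3 3] Q1 by auto
  have "a < a1" "a1 < a2"
    using row_band_less[of a 1 a1 2] row_band_less[of a1 2 a2 3] ab ab1 ab2 Q1 by simp_all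
  moreover have "b1 < b" "b < b2"
    using col_band_less[of b1 1 b 2] col_band_less[of b 2 b2 3] ab ab1 ab2 Q1 by simp_all
  moreover have "a2 \<le> nrows P" "b2 \<le> ncols P"
    using ab2 row_cut_last col_cut_last Q1 by auto
  ultimately have "Q1_top P a b"
    using ab ab1 ab2 unfolding Q1_top_def
    by (intro conjI exI[of _ a1] exI[of _ b1] exI[of _ a2] exI[of _ b2]) auto
  then show ?thesis by blast
qed

lemma Q1_top_max_row:
  assumes "interval_minor Q1 P"
  obtains \<rho> \<kappa> where "Q1_top P \<rho> \<kappa>" "\<And>i j. Q1_top P i j \<Longrightarrow> i \<le> \<rho>"
proof -
  define S where "S = {i. \<exists>j. Q1_top P i j}"
  have "finite S"
    by (rule finite_subset[of _ "{..nrows P}"]) (auto simp: S_def Q1_top_def)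
  moreover have "S \<noteq> {}" using Q1_top_exists[OF assms] by (simp add: S_def)
  ultimately have "Max S \<in> S" "\<And>i. i \<in> S \<Longrightarrow> i \<le> Max S" by simp_all
  then show ?thesis using that unfolding S_def by blast
qed

lemma mod_less_mod_of_div_eq:
  fixes x y d :: nat
  assumes "x div d = y div d" "x < y"
  shows "x mod d < y mod d"
proof -
  have "x div d * d + x mod d < y div d * d + y mod d" using assms(2) by simp
  with assms(1) show ?thesis by (metis add_less_cancel_left)
qed

lemma div_mod_between:
  fixes x y z d :: nat
  assumes "x < y" "y < z" "x div d = z div d"
  shows "y div d = x div d" "x mod d < y mod d" "y mod d < z mod d"
proof -
  have "x div d \<le> y div d" "y div d \<le> z div d"
    using assms(1,2) by (simp_all add: div_le_mono)
  with assms(3) show "y div d = x div d" by simp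
  with assms show "x mod d < y mod d" "y mod d < z mod d"
    by (auto intro: mod_less_mod_of_div_eq)
qed

locale Q1_construction =
  fixes P :: bmat and \<rho> \<kappa> N :: nat
  assumes Q1_top: "Q1_top P \<rho> \<kappa>"
    and top_row_max: "\<And>i j. Q1_top P i j \<Longrightarrow> i \<le> \<rho>"
begin

definition w :: nat where "w = Suc (ncols P)"
definition h :: nat where "h = Suc (nrows P) - \<rho>"

definition copy :: "nat \<Rightarrow> nat" where "copy a = (a - Suc \<rho>) div h"
definition src_row :: "nat \<Rightarrow> nat" where "src_row a = \<rho> + (a - Suc \<rho>) mod h"

text \<open>Column \<open>b\<close> of \<open>MN\<close> is column \<open>b mod w\<close> of block \<open>b div w\<close>; column \<open>0\<close> of each
  block separates it from the previous one. Rows \<open>a > \<rho>\<close> form \<open>N\<close> horizontal strips of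
  height \<open>h\<close>: row \<open>a\<close> is row \<open>src_row a\<close> of \<open>P\<close> in strip \<open>copy a\<close>, which occupies
  block \<open>N - 1 - copy a\<close>.\<close>

definition MN_entry :: "nat \<Rightarrow> nat \<Rightarrow> bool" where
  "MN_entry a b \<longleftrightarrow>
     (if a < \<rho> then b mod w \<noteq> 0 \<and> entry P a (b mod w)
      else if a = \<rho> then b mod w = 0
      else copy a < N \<and> b div w = N - Suc (copy a) \<and> b mod w \<noteq> 0 \<and>
        entry P (src_row a) (b mod w) \<and> (src_row a, b mod w) \<noteq> (\<rho>, \<kappa>))"

definition MN :: bmat where "MN = (\<rho> + N * h, N * w, MN_entry)"

lemma MN_simps [simp]: "nrows MN = \<rho> + N * h" "ncols MN = N * w" "entry MN = MN_entry"
  by (simp_all add: MN_def nrows_def ncols_def entry_def)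

lemma top_entry: "1 \<le> \<rho>" "\<rho> < nrows P" "1 \<le> \<kappa>" "\<kappa> < ncols P" "entry P \<rho> \<kappa>"
  using Q1_top unfolding Q1_top_def by auto

lemma h_pos: "0 < h" and w_pos: "0 < w" and rho_plus_h: "\<rho> + h = Suc (nrows P)"
  using top_entry by (simp_all add: h_def w_def)

lemma src_row_le: "src_row a \<le> nrows P"
  using mod_less_divisor[OF h_pos, of "a - Suc \<rho>"] rho_plus_h by (simp add: src_row_def)

lemma copy_le_iff: "copy a \<le> q \<longleftrightarrow> a \<le> \<rho> + Suc q * h"
proof
  assume "copy a \<le> q"
  have "a - Suc \<rho> = copy a * h + (a - Suc \<rho>) mod h"
    unfolding copy_def by (rule div_mult_mod_eq[symmetric])
  also have "\<dots> < copy a * h + h"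
    using h_pos by simp
  also have "\<dots> \<le> Suc q * h"
    using \<open>copy a \<le> q\<close> by (simp add: mult_le_mono1)
  finally show "a \<le> \<rho> + Suc q * h" by linarith
next
  assume "a \<le> \<rho> + Suc q * h"
  moreover have "0 < Suc q * h" using h_pos by simp
  ultimately have "a - Suc \<rho> < Suc q * h" by linarith
  then show "copy a \<le> q"
    unfolding copy_def using less_mult_imp_div_less less_Suc_eq_le by blast
qed

lemma lower_entry:
  assumes "\<rho> < a" "MN_entry a b"
  shows "copy a < N" "b div w = N - Suc (copy a)" "b mod w \<noteq> 0"
    "entry P (src_row a) (b mod w)" "(src_row a, b mod w) \<noteq> (\<rho>, \<kappa>)"
  using assms by (simp_all add: MN_entry_def)

lemma MN_entry_upper:
  assumes "a < \<rho>" "e < w"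
  shows "MN_entry a (s * w + e) \<longleftrightarrow> e \<noteq> 0 \<and> entry P a e"
  using assms by (simp add: MN_entry_def)

lemma MN_entry_lower:
  assumes "d < h" "q < N" "e < w"
  shows "MN_entry (Suc (\<rho> + q * h + d)) (s * w + e) \<longleftrightarrow>
    s = N - Suc q \<and> e \<noteq> 0 \<and> entry P (\<rho> + d) e \<and> (d, e) \<noteq> (0, \<kappa>)"
proof -
  have "copy (Suc (\<rho> + q * h + d)) = q" "src_row (Suc (\<rho> + q * h + d)) = \<rho> + d"
    using assms(1) by (simp_all add: copy_def src_row_def)
  with assms show ?thesis by (auto simp: MN_entry_def)
qed

lemma lower_entries_same_copy:
  assumes "\<rho> < a1" "a1 < a2" "b1 < b2" "MN_entry a1 b1" "MN_entry a2 b2"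
  shows "copy a1 = copy a2" "b1 div w = b2 div w"
proof -
  have "copy a1 \<le> copy a2" "b1 div w \<le> b2 div w"
    using assms(2,3) by (simp_all add: copy_def div_le_mono)
  moreover have "b1 div w = N - Suc (copy a1)" "b2 div w = N - Suc (copy a2)"
    "copy a1 < N" "copy a2 < N"
    using lower_entry[of a1 b1] lower_entry[of a2 b2] assms by auto
  ultimately show "copy a1 = copy a2" "b1 div w = b2 div w" by linarith+
qed

lemma Q1_top_of_lower_entries:
  assumes "\<rho> \<le> a" "a < a1" "a1 < a2" "b1 < b" "b < b2"
    and "MN_entry a b" "MN_entry a1 b1" "MN_entry a2 b2"
  shows "\<rho> < a" "copy a = copy a1" "Q1_top P (src_row a) (b mod w)"
proof -
  have "\<rho> < a1" using assms(1,2) by simp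
  then have copy12: "copy a1 = copy a2" and block12: "b1 div w = b2 div w"
    using lower_entries_same_copy assms(3,4,5,7,8) by (metis less_trans)+
  then have block: "b div w = b1 div w" and cols: "b1 mod w < b mod w" "b mod w < b2 mod w"
    using div_mod_between[OF assms(4,5)] by simp_all
  then have "b mod w \<noteq> 0" by simp
  with assms(1,6) show "\<rho> < a"
    by (cases "a = \<rho>") (simp_all add: MN_entry_def)
  then show copy01: "copy a = copy a1"
    using block lower_entry[OF _ assms(6)] lower_entry[OF \<open>\<rho> < a1\<close> assms(7)] by simp
  have "\<rho> < a2" using \<open>\<rho> < a1\<close> assms(3) by simp
  have "a - Suc \<rho> < a1 - Suc \<rho>" "a1 - Suc \<rho> < a2 - Suc \<rho>"
    using \<open>\<rho> < a\<close> assms(2,3) by simp_all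
  then have "(a - Suc \<rho>) mod h < (a1 - Suc \<rho>) mod h" "(a1 - Suc \<rho>) mod h < (a2 - Suc \<rho>) mod h"
    using mod_less_mod_of_div_eq copy01 copy12 unfolding copy_def by simp_all
  then have rows: "src_row a < src_row a1" "src_row a1 < src_row a2" "1 \<le> src_row a"
    using top_entry(1) by (simp_all add: src_row_def)
  have "b2 mod w \<le> ncols P"
    using mod_less_divisor[OF w_pos, of b2] by (simp add: w_def)
  moreover note lower_entry(3,4)[OF \<open>\<rho> < a\<close> assms(6)] lower_entry(3,4)[OF \<open>\<rho> < a1\<close> assms(7)]
    lower_entry(4)[OF \<open>\<rho> < a2\<close> assms(8)]
  ultimately show "Q1_top P (src_row a) (b mod w)"
    unfolding Q1_top_def using cols rows src_row_le[of a2]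
    by (intro conjI exI[of _ "src_row a1"] exI[of _ "b1 mod w"] exI[of _ "src_row a2"]
        exI[of _ "b2 mod w"]) simp_all
qed

text \<open>The image of a top entry in row \<open>\<rho>\<close> lies in a strip, on the row coming from row
  \<open>\<rho>\<close> of \<open>P\<close> (by the maximality of \<open>\<rho>\<close>), and that strip reaches below the row band
  of \<open>\<rho>\<close>.\<close>

lemma top_row_image:
  assumes emb: "interval_embedding P MN r c" and j: "Q1_top P \<rho> j"
    and ab: "a \<in> {r (\<rho> - 1)<..r \<rho>}" "b \<in> {c (j - 1)<..c j}" "MN_entry a b"
  shows "\<rho> < a" "Q1_top P \<rho> (b mod w)" "b mod w \<noteq> \<kappa>" "r \<rho> < \<rho> + Suc (copy a) * h"
proof -
  interpret interval_embedding P MN r c by (rule emb)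
  obtain i1 j1 i2 j2 where ij: "\<rho> < i1" "i1 < i2" "i2 \<le> nrows P" "1 \<le> j1" "j1 < j" "j < j2"
    "j2 \<le> ncols P" "entry P i1 j1" "entry P i2 j2"
    using j unfolding Q1_top_def by blast
  have "\<exists>a1\<in>{r (i1 - 1)<..r i1}. \<exists>b1\<in>{c (j1 - 1)<..c j1}. entry MN a1 b1"
    by (rule image_exists) (use ij in auto)
  then obtain a1 b1 where ab1: "a1 \<in> {r (i1 - 1)<..r i1}" "b1 \<in> {c (j1 - 1)<..c j1}" "MN_entry a1 b1"
    by auto
  have "\<exists>a2\<in>{r (i2 - 1)<..r i2}. \<exists>b2\<in>{c (j2 - 1)<..c j2}. entry MN a2 b2"
    by (rule image_exists) (use ij in auto)
  then obtain a2 b2 where ab2: "a2 \<in> {r (i2 - 1)<..r i2}" "b2 \<in> {c (j2 - 1)<..c j2}" "MN_entry a2 b2"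
    by auto
  have "r \<rho> \<le> r (i1 - 1)" using row_cut_mono ij by simp
  with ab1(1) have "r \<rho> < a1" by simp
  moreover have "\<rho> - 1 \<le> r (\<rho> - 1)" using row_cut_ge top_entry by simp
  ultimately have "\<rho> \<le> a" "a < a1" using ab(1) by auto
  moreover have "a1 < a2" using row_band_less[OF ab1(1) ab2(1)] ij by simp
  moreover have "b1 < b" "b < b2"
    using col_band_less[OF ab1(2) ab(2)] col_band_less[OF ab(2) ab2(2)] ij by simp_all
  ultimately have lower: "\<rho> < a" "copy a = copy a1" "Q1_top P (src_row a) (b mod w)"
    using Q1_top_of_lower_entries[OF _ _ _ _ _ ab(3) ab1(3) ab2(3)] by simp_all
  then show "\<rho> < a" by simp
  have "src_row a = \<rho>" using top_row_max[OF lower(3)] by (simp add: src_row_def)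
  with lower show "Q1_top P \<rho> (b mod w)" "b mod w \<noteq> \<kappa>"
    using lower_entry(5)[OF lower(1) ab(3)] by auto
  show "r \<rho> < \<rho> + Suc (copy a) * h"
    using \<open>r \<rho> < a1\<close> copy_le_iff[of a1 "copy a1"] lower(2) by simp
qed

lemma MN_avoids: "\<not> interval_minor P MN"
proof
  assume "interval_minor P MN"
  then obtain r c where emb: "interval_embedding P MN r c"
    using interval_minor_iff_embedding by blast
  interpret interval_embedding P MN r c by (rule emb)
  define J where "J = {j. Q1_top P \<rho> j}"
  have "finite J"
    by (rule finite_subset[of _ "{..<ncols P}"]) (use Q1_top_bounds[of P \<rho>] in \<open>auto simp: J_def\<close>)
  have "\<exists>a\<in>{r (\<rho> - 1)<..r \<rho>}. \<exists>b\<in>{c (j - 1)<..c j}. entry MN a b" if "j \<in> J" for j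
  proof (rule image_exists)
    show "\<rho> \<in> {1..nrows P}" "j \<in> {1..ncols P}" "entry P \<rho> j"
      using that top_entry by (auto simp: J_def Q1_top_def)
  qed
  then obtain A B where AB_entry: "\<And>j. j \<in> J \<Longrightarrow>
      A j \<in> {r (\<rho> - 1)<..r \<rho>} \<and> B j \<in> {c (j - 1)<..c j} \<and> entry MN (A j) (B j)"
    by metis
  then have AB: "\<And>j. j \<in> J \<Longrightarrow>
      A j \<in> {r (\<rho> - 1)<..r \<rho>} \<and> B j \<in> {c (j - 1)<..c j} \<and> MN_entry (A j) (B j)"
    by simp
  define g where "g j = B j mod w" for j
  have image: "A j \<le> r \<rho>" "r \<rho> < \<rho> + Suc (copy (A j)) * h" "g j \<in> J - {\<kappa>}"
    "B j div w = N - Suc (copy (A j))" if "j \<in> J" for j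
  proof -
    have j: "Q1_top P \<rho> j" using that by (simp add: J_def)
    have ab: "A j \<in> {r (\<rho> - 1)<..r \<rho>}" "B j \<in> {c (j - 1)<..c j}" "MN_entry (A j) (B j)"
      using AB[OF that] by simp_all
    note top = top_row_image[OF emb j ab]
    show "A j \<le> r \<rho>" using ab(1) by simp
    show "r \<rho> < \<rho> + Suc (copy (A j)) * h" by (rule top(4))
    show "g j \<in> J - {\<kappa>}" using top(2,3) by (simp add: J_def g_def)
    show "B j div w = N - Suc (copy (A j))" by (rule lower_entry(2)[OF top(1) ab(3)])
  qed
  have copy_le: "copy (A u) \<le> copy (A v)" if "u \<in> J" "v \<in> J" for u v
  proof -
    have "A u \<le> \<rho> + Suc (copy (A v)) * h"
      using image(1)[OF that(1)] image(2)[OF that(2)] by linarith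
    then show ?thesis by (simp add: copy_le_iff)
  qed
  have "strict_mono_on J g"
  proof (rule strict_mono_onI)
    fix u v assume uv: "u \<in> J" "v \<in> J" "u < v"
    have "v < ncols P" using Q1_top_bounds uv(2) unfolding J_def by blast
    then have "B u < B v"
      using col_band_less[of "B u" u "B v" v] AB[OF uv(1)] AB[OF uv(2)] uv(3) by simp
    moreover have "B u div w = B v div w"
      using image(4) copy_le[of u v] copy_le[of v u] uv by (simp add: le_antisym)
    ultimately show "g u < g v" unfolding g_def by (rule mod_less_mod_of_div_eq[rotated])
  qed
  then have "inj_on g J" by (rule strict_mono_on_imp_inj_on)
  moreover have "g ` J \<subseteq> J" using image(3) by blast
  ultimately have "g ` J = J" using endo_inj_surj[OF \<open>finite J\<close>] by blast
  moreover have "\<kappa> \<in> J" using Q1_top by (simp add: J_def)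
  ultimately have "\<kappa> \<in> g ` J" by simp
  then show False using image(3) by blast
qed

lemma MN_set_one_contains_P:
  assumes "t < N"
  shows "interval_minor P (set_one MN \<rho> (t * w + \<kappa>))"
proof -
  define G where "G = set_one MN \<rho> (t * w + \<kappa>)"
  have G: "nrows G = \<rho> + N * h" "ncols G = N * w"
    "\<And>a b. entry G a b \<longleftrightarrow> (a = \<rho> \<and> b = t * w + \<kappa>) \<or> MN_entry a b"
    by (simp_all add: G_def)
  define q where "q = N - Suc t"
  have q: "q < N" "N - Suc q = t" using assms by (auto simp: q_def)
  have qh: "Suc q * h \<le> N * h" using q(1) by (intro mult_le_mono1) simp
  have t: "t * w + ncols P < N * w"
    using assms mult_le_mono1[of "Suc t" N w] by (simp add: w_def)
  define R where "R i = (if i < \<rho> then i else if i = nrows P then \<rho> + N * h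
    else Suc (\<rho> + q * h + (i - \<rho>)))" for i
  define C where "C j = (if j = 0 then 0 else if j = ncols P then N * w else t * w + j)" for j
  note bounds = top_entry(1-4) rho_plus_h
  have "interval_embedding P G R C"
  proof
    show "R 0 = 0" "R (nrows P) = nrows G" "C 0 = 0" "C (ncols P) = ncols G"
      using bounds by (simp_all add: R_def C_def G)
  next
    fix i assume "i < nrows P"
    then show "R i < R (Suc i)" using bounds qh by (auto simp: R_def)
  next
    fix j assume "j < ncols P"
    then show "C j < C (Suc j)" using t assms w_pos by (auto simp: C_def)
  next
    fix i j assume i: "i \<in> {1..nrows P}" and j: "j \<in> {1..ncols P}" and ij: "entry P i j"
    have j_w: "j < w" using j by (simp add: w_def)
    have "t * w + j \<in> {C (j - 1)<..C j}" using j t by (auto simp: C_def)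
    moreover have "\<exists>a \<in> {R (i - 1)<..R i}. entry G a (t * w + j)"
    proof (cases "i < \<rho>")
      case True
      then show ?thesis
        using i j ij j_w MN_entry_upper by (intro bexI[of _ i]) (auto simp: R_def G)
    next
      case False
      show ?thesis
      proof (cases "(i, j) = (\<rho>, \<kappa>)")
        case True
        then show ?thesis using bounds by (intro bexI[of _ \<rho>]) (auto simp: R_def G)
      next
        case False
        have "i - \<rho> < h" using i bounds \<open>\<not> i < \<rho>\<close> by simp
        then have "MN_entry (Suc (\<rho> + q * h + (i - \<rho>))) (t * w + j)"
          using MN_entry_lower[OF _ q(1) j_w, of "i - \<rho>" t] q(2) j ij False \<open>\<not> i < \<rho>\<close>
          by auto
        moreover have "Suc (\<rho> + q * h + (i - \<rho>)) \<in> {R (i - 1)<..R i}"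
          using i bounds qh \<open>\<not> i < \<rho>\<close> by (auto simp: R_def)
        ultimately show ?thesis by (auto simp: G)
      qed
    qed
    ultimately show "\<exists>a \<in> {R (i - 1)<..R i}. \<exists>b \<in> {C (j - 1)<..C j}. entry G a b" by blast
  qed
  then show ?thesis using interval_minor_iff_embedding G_def by blast
qed

lemma critical_matrix_with_complex_row:
  obtains M where "critical (Av P) M" "\<rho> \<in> {1..nrows M}" "N \<le> row_complexity M \<rho>"
proof -
  have "MN \<in> Av P" using MN_avoids by (simp add: Av_def)
  then obtain M where crit: "critical (Av P) M" and dims: "nrows M = nrows MN" "ncols M = ncols MN"
    and ext: "\<And>a b. a \<in> {1..nrows MN} \<Longrightarrow> b \<in> {1..ncols MN} \<Longrightarrow> entry MN a b \<Longrightarrow> entry M a b"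
    by (rule Av_critical_extension) blast
  have col: "Suc t * w \<le> N * w" if "t < N" for t
    using that by (intro mult_le_mono1) simp
  have "\<not> entry M \<rho> (t * w + \<kappa>)" if "t < N" for t
  proof
    assume "entry M \<rho> (t * w + \<kappa>)"
    with ext have "interval_minor P M"
      by (intro interval_minor_mono[OF MN_set_one_contains_P[OF that]]) (auto simp: dims)
    with crit show False by (simp add: critical_def Av_def)
  qed
  moreover have "1 \<le> t * w + \<kappa> \<and> t * w + \<kappa> \<le> ncols M" if "t < N" for t
    using col[OF that] top_entry(3,4) dims by (simp add: w_def)
  moreover have "entry M \<rho> (Suc t * w)" if "Suc t < N" for t
    using ext[of \<rho> "Suc t * w"] col[OF that] top_entry(1) w_pos by (simp add: MN_entry_def)
  moreover have "t * w + \<kappa> < Suc t * w" "Suc t * w < Suc t * w + \<kappa>" for t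
    using top_entry(3,4) by (simp_all add: w_def)
  ultimately have "N \<le> row_complexity M \<rho>"
    by (intro row_complexity_ge[where z = "\<lambda>t. t * w + \<kappa>"]) (metis mult_Suc)+
  moreover have "\<rho> \<in> {1..nrows M}" using top_entry(1) dims by simp
  ultimately show ?thesis using crit that by blast
qed

end

theorem theorem3p4:
  fixes P :: bmat
  assumes "interval_minor Q1 P"
  shows "row_unbounded (Av P)"
  unfolding row_unbounded_def
proof
  fix N :: nat
  obtain \<rho> \<kappa> where "Q1_top P \<rho> \<kappa>" "\<And>i j. Q1_top P i j \<Longrightarrow> i \<le> \<rho>"
    using Q1_top_max_row[OF assms] by blast
  then interpret Q1_construction P \<rho> \<kappa> N by unfold_locales
  obtain M where "critical (Av P) M" "\<rho> \<in> {1..nrows M}" "N \<le> row_complexity M \<rho>"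
    by (rule critical_matrix_with_complex_row)
  then show "\<exists>M. critical (Av P) M \<and> (\<exists>i \<in> {1..nrows M}. N \<le> row_complexity M i)" by blast
qed

end
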